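(* Let $\{G(n)\}$ be a sequence of random intersection graphs satisfying condition (A) and $\mathrm{Var}(Y(n))=O(1)$. Then $\omega(G(n))=\omega'(G(n))+O_P(1)$. If, in addition, there is a positive sequence $\varepsilon_n\to0$ with $n\,\mathbb P(Y(n)>\varepsilon_n n^{1/2})\to0$, then there is an absolute constant $C$ such that $\mathbb P\big(\omega(G(n))\le \max\{C,\ \omega'(G(n))+3\}\big)\to1$.
   Context: Random intersection graph: given positive integers $n,m$ and a probability measure $P$ on $\{0,1,\dots,m\}$, $G(n,m,P)$ has vertex set $V=[n]$ and attribute set $W=\{w_1,\dots,w_m\}$; independent random subsets $S_1,\dots,S_n\subseteq W$ are drawn with $\mathbb P(S_v=S)=P(|S|)/\binom{m}{|S|}$ for every $S\subseteq W$, and distinct $u,v$ are adjacent iff $S_u\cap S_v\neq\emptyset$. For a sequence $G(n)=G(n,m(n),P(n))$ with $m(n)\to\infty$, $X(n)$ has law $P(n)$ and $Y(n)=(n/m)^{1/2}X(n)$. Condition (A): $\mathbb E\,Y(n)=O(1)$. $\omega(G)$ is the clique number. For $w\in W$, $T(w)=\{v\in V: w\in S_v\}$ (a clique, called monochromatic), and $\omega'(G(n))=\max_{w\in W}|T(w)|$. *)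

theory Defs
  imports "HOL-Probability.Probability"
begin

text \<open>Attribute set W = {..<m}; vertex set V = {..<n}.
  Law of a single random attribute set S_v: draw k from P, then a uniformly
  random k-subset of W, so that Pr(S_v = S) = P(|S|) / (m choose |S|).\<close>
definition attr_pmf :: "nat \<Rightarrow> nat pmf \<Rightarrow> nat set pmf" where
  "attr_pmf m P = bind_pmf P (\<lambda>k. pmf_of_set {S. S \<subseteq> {..<m} \<and> card S = k})"

text \<open>G(n,m,P), represented by the independent family of attribute sets (S_v) for v < n.\<close>
definition RIG :: "nat \<Rightarrow> nat \<Rightarrow> nat pmf \<Rightarrow> (nat \<Rightarrow> nat set) pmf" where
  "RIG n m P = Pi_pmf {..<n} {} (\<lambda>_. attr_pmf m P)"

definition is_clique :: "nat \<Rightarrow> (nat \<Rightarrow> nat set) \<Rightarrow> nat set \<Rightarrow> bool" where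
  "is_clique n S K \<longleftrightarrow> K \<subseteq> {..<n} \<and> (\<forall>u\<in>K. \<forall>v\<in>K. u \<noteq> v \<longrightarrow> S u \<inter> S v \<noteq> {})"

definition clique_number :: "nat \<Rightarrow> (nat \<Rightarrow> nat set) \<Rightarrow> nat" where
  "clique_number n S = Max (card ` {K. is_clique n S K})"

text \<open>Largest monochromatic clique: max over w in W of |T(w)| (0 if W is empty).\<close>
definition mono_clique_number :: "nat \<Rightarrow> nat \<Rightarrow> (nat \<Rightarrow> nat set) \<Rightarrow> nat" where
  "mono_clique_number n m S = Max (insert 0 ((\<lambda>w. card {v\<in>{..<n}. w \<in> S v}) ` {..<m}))"

text \<open>Y(n) = (n/m)^(1/2) X(n), as a function of the value k of X(n).\<close>
definition Yval :: "nat \<Rightarrow> nat \<Rightarrow> nat \<Rightarrow> real" where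
  "Yval n m k = sqrt (real n / real m) * real k"

definition RIG_seq :: "(nat \<Rightarrow> nat) \<Rightarrow> (nat \<Rightarrow> nat pmf) \<Rightarrow> bool" where
  "RIG_seq m P \<longleftrightarrow> (\<forall>n. set_pmf (P n) \<subseteq> {..m n}) \<and> filterlim m at_top sequentially"

definition condA :: "(nat \<Rightarrow> nat) \<Rightarrow> (nat \<Rightarrow> nat pmf) \<Rightarrow> bool" where
  "condA m P \<longleftrightarrow> (\<exists>B. \<forall>\<^sub>F n in sequentially.
      \<bar>measure_pmf.expectation (P n) (Yval n (m n))\<bar> \<le> B)"

definition var_bounded :: "(nat \<Rightarrow> nat) \<Rightarrow> (nat \<Rightarrow> nat pmf) \<Rightarrow> bool" where
  "var_bounded m P \<longleftrightarrow> (\<exists>B. \<forall>\<^sub>F n in sequentially.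
      \<bar>measure_pmf.variance (P n) (Yval n (m n))\<bar> \<le> B)"

end

theory Submission
  imports Defs
begin

text \<open>A configuration prescribing attribute sets \<open>N\<^sub>1, \<dots>, N\<^sub>k\<close> over
  \<open>l\<close> attribute labels on \<open>k\<close> vertices, each carrying at most \<open>T\<close> attributes, occurs in
  expectation at most \<open>n^k m^l \<Prod>\<^sub>i E[(X/m)^|N\<^sub>i| 1{X \<le> T}] \<le> E[Y\<^sup>2]^k m^(l-k) (T/m)^(\<Sigma>\<^sub>i (|N\<^sub>i| - 2))\<close>
  times, by independence of the vertices and a binomial estimate for uniform \<open>k\<close>-sets.

  Call a vertex a root if it shares two attributes with another vertex, or meets two other
  vertices pairwise in three distinct attributes. Two non-root vertices of a clique share an
  attribute which every other non-root vertex of the clique contains, so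
  \<open>\<omega> \<le> #roots + max 1 \<omega>'\<close>. Both root configurations have \<open>l = k\<close> and \<open>|N\<^sub>i| = 2\<close>, so the
  number of roots has bounded expectation, and Markov's inequality gives \<open>\<omega> - \<omega>' = O\<^sub>P(1)\<close>.

  For the second claim truncate attribute sets at \<open>T = \<epsilon>\<^sub>n m^(1/2)\<close>, which fails with probability
  at most \<open>n P(Y > \<epsilon>\<^sub>n n^(1/2)) \<rightarrow> 0\<close>. A clique on at least four vertices that is not contained
  in one class \<open>T(w)\<close> then contains one of six configurations, each with positive excess
  \<open>\<Sigma>\<^sub>i (|N\<^sub>i| - 2)\<close> or fewer labels than vertices, hence with vanishing expected count.
  So with high probability \<open>\<omega> \<le> max 3 \<omega>'\<close>.\<close>

lemma binomial_le_ratio_power: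
  fixes d k m :: nat
  assumes "d \<le> k" "k \<le> m"
  shows "real (k choose d) \<le> (real k / real m) ^ d * real (m choose d)"
proof -
  have "real (k choose d) = (\<Prod>i = 0..<d. real (k - i) / real (d - i))"
    using assms binomial_altdef_of_nat by blast
  also have "\<dots> \<le> (\<Prod>i = 0..<d. (real k / real m) * (real (m - i) / real (d - i)))"
  proof (rule prod_mono, safe)
    fix i assume i: "i \<in> {0..<d}"
    have "real (k - i) * real m \<le> real k * real (m - i)"
      using i assms by (simp add: of_nat_diff algebra_simps mult_left_mono)
    hence "real (k - i) \<le> (real k / real m) * real (m - i)"
      using i assms by (simp add: field_simps)
    thus "real (k - i) / real (d - i) \<le> real k / real m * (real (m - i) / real (d - i))"
      by (metis divide_right_mono of_nat_0_le_iff times_divide_eq_right)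
  qed simp
  also have "\<dots> = (real k / real m) ^ d * (\<Prod>i = 0..<d. real (m - i) / real (d - i))"
    by (subst prod.distrib) simp
  also have "(\<Prod>i = 0..<d. real (m - i) / real (d - i)) = real (m choose d)"
    using assms binomial_altdef_of_nat[of d m, where 'a=real] by (simp add: of_nat_diff)
  finally show ?thesis .
qed

lemma card_supersets_of_card:
  assumes "finite M" "A \<subseteq> M" "card A \<le> k"
  shows "card {S. S \<subseteq> M \<and> card S = k \<and> A \<subseteq> S} = (card M - card A) choose (k - card A)"
proof -
  have fA: "finite A" using assms finite_subset by blast
  have "bij_betw (\<lambda>S. S - A) {S. S \<subseteq> M \<and> card S = k \<and> A \<subseteq> S}
          {S'. S' \<subseteq> M - A \<and> card S' = k - card A}"
  proof (rule bij_betwI[where g = "\<lambda>S'. S' \<union> A"])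
    show "(\<lambda>S. S - A) \<in> {S. S \<subseteq> M \<and> card S = k \<and> A \<subseteq> S}
        \<rightarrow> {S'. S' \<subseteq> M - A \<and> card S' = k - card A}"
      using assms fA by (auto simp: card_Diff_subset dest: finite_subset)
    show "(\<lambda>S'. S' \<union> A) \<in> {S'. S' \<subseteq> M - A \<and> card S' = k - card A}
        \<rightarrow> {S. S \<subseteq> M \<and> card S = k \<and> A \<subseteq> S}"
    proof
      fix S assume S: "S \<in> {S'. S' \<subseteq> M - A \<and> card S' = k - card A}"
      hence "finite S" "S \<inter> A = {}" using assms finite_subset by auto
      thus "S \<union> A \<in> {S. S \<subseteq> M \<and> card S = k \<and> A \<subseteq> S}"
        using S assms fA by (auto simp: card_Un_disjoint)
    qed
  qed auto
  hence "card {S. S \<subseteq> M \<and> card S = k \<and> A \<subseteq> S} = card {S'. S' \<subseteq> M - A \<and> card S' = k - card A}"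
    by (rule bij_betw_same_card)
  also have "\<dots> = card (M - A) choose (k - card A)"
    using assms by (intro n_subsets) auto
  finally show ?thesis using assms fA by (simp add: card_Diff_subset)
qed

abbreviation k_subsets :: "nat \<Rightarrow> nat \<Rightarrow> nat set set" where
  "k_subsets m k \<equiv> {S. S \<subseteq> {..<m} \<and> card S = k}"

lemma card_k_subsets_supersets_le:
  fixes A :: "nat set"
  assumes "A \<subseteq> {..<m}" "k \<le> m"
  shows "real (card (k_subsets m k \<inter> {S. A \<subseteq> S})) \<le> (real k / real m) ^ card A * real (m choose k)"
proof (cases "card A \<le> k")
  case False
  hence "k_subsets m k \<inter> {S. A \<subseteq> S} = {}"
    by (auto dest: card_mono[rotated] finite_subset)
  thus ?thesis by (simp del: Int_Collect)
next
  case True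
  let ?d = "card A"
  have "card (k_subsets m k \<inter> {S. A \<subseteq> S}) = (m - ?d) choose (k - ?d)"
    using card_supersets_of_card[of "{..<m}" A k] assms True by (simp add: Int_def conj_assoc)
  moreover have "(m choose k) * (k choose ?d) = (m choose ?d) * ((m - ?d) choose (k - ?d))"
    using choose_mult[of ?d k m] True assms by simp
  ultimately have "real (m choose ?d) * real (card (k_subsets m k \<inter> {S. A \<subseteq> S}))
      = real (m choose k) * real (k choose ?d)"
    by (metis of_nat_mult)
  also have "\<dots> \<le> real (m choose ?d) * ((real k / real m) ^ ?d * real (m choose k))"
    using mult_left_mono[OF binomial_le_ratio_power[OF True assms(2)], of "real (m choose k)"]
    by (simp add: mult_ac)
  finally show ?thesis
    using True assms by (simp add: mult_le_cancel_left_pos)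
qed

lemma finite_k_subsets: "finite (k_subsets m k)"
  by (rule finite_subset[of _ "Pow {..<m}"]) auto

lemma k_subsets_nonempty: "k \<le> m \<Longrightarrow> k_subsets m k \<noteq> {}"
  by (auto intro!: exI[of _ "{..<k}"])

lemma expectation_pmf_atMost:
  fixes g :: "nat \<Rightarrow> real"
  assumes "set_pmf P \<subseteq> {..m}"
  shows "measure_pmf.expectation P g = (\<Sum>k\<le>m. pmf P k * g k)"
  by (subst integral_measure_pmf[of "{..m}"]) (use assms in auto)

lemma prob_eq_expectation_indicator:
  "measure_pmf.prob p X = measure_pmf.expectation p (indicator X)"
  by (simp add: measure_pmf.emeasure_eq_measure)

lemma prob_attr_pmf:
  assumes "set_pmf P \<subseteq> {..m}"
  shows "measure_pmf.prob (attr_pmf m P) X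
          = (\<Sum>k\<le>m. pmf P k * (real (card (k_subsets m k \<inter> X)) / real (card (k_subsets m k))))"
proof -
  have "measure_pmf.prob (attr_pmf m P) X = (\<Sum>k\<le>m. pmf P k *\<^sub>R measure_pmf.expectation (pmf_of_set (k_subsets m k)) (indicator X))"
    unfolding prob_eq_expectation_indicator attr_pmf_def
    by (rule pmf_expectation_bind) (use assms finite_k_subsets k_subsets_nonempty in auto)
  also have "\<dots> = (\<Sum>k\<le>m. pmf P k * (real (card (k_subsets m k \<inter> X)) / real (card (k_subsets m k))))"
    using finite_k_subsets k_subsets_nonempty
    by (intro sum.cong refl) (simp add: measure_pmf_of_set flip: prob_eq_expectation_indicator)
  finally show ?thesis .
qed

lemma set_pmf_attr_pmf:
  assumes "set_pmf P \<subseteq> {..m}" "S \<in> set_pmf (attr_pmf m P)"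
  shows "S \<subseteq> {..<m}"
proof -
  obtain k where k: "k \<in> set_pmf P" "S \<in> set_pmf (pmf_of_set (k_subsets m k))"
    using assms(2) unfolding attr_pmf_def by auto
  have "k \<le> m" using k(1) assms(1) by auto
  hence "set_pmf (pmf_of_set (k_subsets m k)) = k_subsets m k"
    by (intro set_pmf_of_set finite_k_subsets k_subsets_nonempty)
  thus ?thesis using k(2) by simp
qed

definition trunc_moment :: "nat \<Rightarrow> nat pmf \<Rightarrow> real \<Rightarrow> nat \<Rightarrow> real" where
  "trunc_moment m P T d = measure_pmf.expectation P (\<lambda>k. if real k \<le> T then (real k / real m) ^ d else 0)"

lemma trunc_moment_nonneg: "trunc_moment m P T d \<ge> 0"
  unfolding trunc_moment_def by (intro Bochner_Integration.integral_nonneg) auto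

lemma prob_attr_pmf_supset_le:
  assumes P: "set_pmf P \<subseteq> {..m}" and A: "A \<subseteq> {..<m}"
  shows "measure_pmf.prob (attr_pmf m P) {S. A \<subseteq> S \<and> real (card S) \<le> T} \<le> trunc_moment m P T (card A)"
proof -
  have "real (card (k_subsets m k \<inter> {S. A \<subseteq> S \<and> real (card S) \<le> T})) / real (card (k_subsets m k))
        \<le> (if real k \<le> T then (real k / real m) ^ card A else 0)" if "k \<le> m" for k
  proof (cases "real k \<le> T")
    case True
    have "k_subsets m k \<inter> {S. A \<subseteq> S \<and> real (card S) \<le> T} = k_subsets m k \<inter> {S. A \<subseteq> S}"
      using True by auto
    moreover have "card (k_subsets m k) = m choose k"
      using n_subsets[of "{..<m}" k] by simp
    ultimately show ?thesis
      using True that card_k_subsets_supersets_le[OF A that] by (simp add: divide_le_eq)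
  next
    case False
    hence "k_subsets m k \<inter> {S. A \<subseteq> S \<and> real (card S) \<le> T} = {}" by auto
    thus ?thesis using False by (simp only: card.empty) simp
  qed
  hence "measure_pmf.prob (attr_pmf m P) {S. A \<subseteq> S \<and> real (card S) \<le> T}
      \<le> (\<Sum>k\<le>m. pmf P k * (if real k \<le> T then (real k / real m) ^ card A else 0))"
    unfolding prob_attr_pmf[OF P] by (intro sum_mono mult_left_mono) auto
  thus ?thesis
    unfolding trunc_moment_def expectation_pmf_atMost[OF P] .
qed

lemma map_pmf_card_attr_pmf:
  assumes "set_pmf P \<subseteq> {..m}"
  shows "map_pmf card (attr_pmf m P) = P"
proof -
  have "map_pmf card (pmf_of_set (k_subsets m k)) = return_pmf k" if "k \<in> set_pmf P" for k
  proof -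
    have "k \<le> m" using that assms by auto
    hence "set_pmf (pmf_of_set (k_subsets m k)) = k_subsets m k"
      by (intro set_pmf_of_set finite_k_subsets k_subsets_nonempty)
    hence "map_pmf card (pmf_of_set (k_subsets m k)) = map_pmf (\<lambda>_. k) (pmf_of_set (k_subsets m k))"
      by (intro map_pmf_cong) auto
    thus ?thesis by simp
  qed
  hence "bind_pmf P (\<lambda>k. map_pmf card (pmf_of_set (k_subsets m k))) = bind_pmf P return_pmf"
    by (rule bind_pmf_cong[OF refl])
  thus ?thesis
    unfolding attr_pmf_def map_bind_pmf bind_return_pmf' .
qed

lemma prob_attr_pmf_card_gt:
  assumes "set_pmf P \<subseteq> {..m}"
  shows "measure_pmf.prob (attr_pmf m P) {S. real (card S) > T} = measure_pmf.prob P {k. real k > T}"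
  using measure_map_pmf[of card "attr_pmf m P" "{k. real k > T}"]
  unfolding map_pmf_card_attr_pmf[OF assms] by (simp add: vimage_def)

lemma set_pmf_RIG:
  assumes "set_pmf P \<subseteq> {..m}" "S \<in> set_pmf (RIG n m P)" "v < n"
  shows "S v \<subseteq> {..<m}"
  using assms set_pmf_attr_pmf unfolding RIG_def by (auto simp: set_Pi_pmf PiE_dflt_def)

lemma prob_RIG_injective:
  assumes inj: "inj_on \<phi> {..<k}" and range: "\<phi> ` {..<k} \<subseteq> {..<n}"
  shows "measure_pmf.prob (RIG n m P) {S. \<forall>i<k. S (\<phi> i) \<in> B i}
        = (\<Prod>i<k. measure_pmf.prob (attr_pmf m P) (B i))"
proof -
  define B' where "B' = (\<lambda>v. if v \<in> \<phi> ` {..<k} then B (the_inv_into {..<k} \<phi> v) else UNIV)"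
  have B'_\<phi>: "B' (\<phi> i) = B i" if "i < k" for i
    using that inj by (simp add: B'_def the_inv_into_f_f)
  have "{S. \<forall>i<k. S (\<phi> i) \<in> B i} = Pi {..<n} B'"
  proof (intro set_eqI iffI)
    fix S assume "S \<in> {S. \<forall>i<k. S (\<phi> i) \<in> B i}"
    thus "S \<in> Pi {..<n} B'" using B'_\<phi> by (auto simp: B'_def)
  next
    fix S assume "S \<in> Pi {..<n} B'"
    thus "S \<in> {S. \<forall>i<k. S (\<phi> i) \<in> B i}" using range B'_\<phi> by (force simp: Pi_def)
  qed
  hence "measure_pmf.prob (RIG n m P) {S. \<forall>i<k. S (\<phi> i) \<in> B i}
      = (\<Prod>v<n. measure_pmf.prob (attr_pmf m P) (B' v))"
    unfolding RIG_def by (simp add: measure_Pi_pmf_Pi)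
  also have "\<dots> = (\<Prod>v\<in>\<phi> ` {..<k}. measure_pmf.prob (attr_pmf m P) (B' v))"
    by (rule prod.mono_neutral_right) (use range in \<open>auto simp: B'_def\<close>)
  also have "\<dots> = (\<Prod>i<k. measure_pmf.prob (attr_pmf m P) (B i))"
    using B'_\<phi> by (simp add: prod.reindex[OF inj])
  finally show ?thesis .
qed

lemma expectation_card_filter:
  fixes p :: "'a pmf" and Q :: "'b \<Rightarrow> 'a \<Rightarrow> bool"
  assumes "finite I"
  shows "measure_pmf.expectation p (\<lambda>S. real (card {x\<in>I. Q x S}))
         = (\<Sum>x\<in>I. measure_pmf.prob p {S. Q x S})"
proof -
  have card_eq: "real (card {x\<in>I. Q x S}) = (\<Sum>x\<in>I. indicator {S. Q x S} S)" for S
    using assms by (simp add: indicator_def Int_def)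
  have "measure_pmf.expectation p (\<lambda>S. real (card {x\<in>I. Q x S}))
       = (\<Sum>x\<in>I. measure_pmf.expectation p (indicator {S. Q x S}))"
    unfolding card_eq
    by (intro Bochner_Integration.integral_sum integrable_real_indicator) (simp_all add: measure_pmf.emeasure_finite flip: less_top)
  thus ?thesis by simp
qed

definition injections :: "nat \<Rightarrow> nat \<Rightarrow> (nat \<Rightarrow> nat) set" where
  "injections k n = {f \<in> {..<k} \<rightarrow>\<^sub>E {..<n}. inj_on f {..<k}}"

lemma finite_injections: "finite (injections k n)"
  unfolding injections_def by (rule finite_subset[of _ "{..<k} \<rightarrow>\<^sub>E {..<n}"]) (auto intro: finite_PiE)

lemma card_injections_le: "card (injections k n) \<le> n ^ k"
proof -
  have "card (injections k n) \<le> card ({..<k} \<rightarrow>\<^sub>E {..<n})"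
    unfolding injections_def by (rule card_mono) (auto intro: finite_PiE)
  thus ?thesis by (simp add: card_PiE)
qed

text \<open>A pattern \<open>Ns\<close> prescribes, for vertices \<open>0, \<dots>, length Ns - 1\<close>, attribute sets
  \<open>Ns ! i\<close> with labels in \<open>{..<l}\<close>.\<close>
definition pattern_embeddings ::
    "nat \<Rightarrow> nat \<Rightarrow> real \<Rightarrow> nat set list \<Rightarrow> nat \<Rightarrow> (nat \<Rightarrow> nat set)
       \<Rightarrow> ((nat \<Rightarrow> nat) \<times> (nat \<Rightarrow> nat)) set"
  where "pattern_embeddings n m T Ns l S = {(\<phi>, \<psi>) \<in> injections (length Ns) n \<times> injections l m.
      \<forall>i<length Ns. \<psi> ` (Ns ! i) \<subseteq> S (\<phi> i) \<and> real (card (S (\<phi> i))) \<le> T}"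

lemma finite_pattern_embeddings: "finite (pattern_embeddings n m T Ns l S)"
  by (rule finite_subset[of _ "injections (length Ns) n \<times> injections l m"])
     (auto simp: pattern_embeddings_def finite_injections)

lemma expectation_card_pattern_embeddings_le:
  assumes P: "set_pmf P \<subseteq> {..m}" and Ns: "\<forall>i<length Ns. Ns ! i \<subseteq> {..<l}"
  shows "measure_pmf.expectation (RIG n m P) (\<lambda>S. real (card (pattern_embeddings n m T Ns l S)))
         \<le> real n ^ length Ns * real m ^ l * (\<Prod>i<length Ns. trunc_moment m P T (card (Ns ! i)))"
proof -
  let ?k = "length Ns" and ?I = "injections (length Ns) n \<times> injections l m"
  let ?H = "\<Prod>i<?k. trunc_moment m P T (card (Ns ! i))"
  define Q :: "(nat \<Rightarrow> nat) \<times> (nat \<Rightarrow> nat) \<Rightarrow> (nat \<Rightarrow> nat set) \<Rightarrow> bool"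
    where "Q = (\<lambda>(\<phi>, \<psi>) S. \<forall>i<?k. S (\<phi> i) \<in> {X. \<psi> ` (Ns ! i) \<subseteq> X \<and> real (card X) \<le> T})"
  have "pattern_embeddings n m T Ns l S = {x\<in>?I. Q x S}" for S
    by (auto simp: pattern_embeddings_def Q_def)
  hence "measure_pmf.expectation (RIG n m P) (\<lambda>S. real (card (pattern_embeddings n m T Ns l S)))
      = (\<Sum>x\<in>?I. measure_pmf.prob (RIG n m P) {S. Q x S})"
    by (simp add: expectation_card_filter finite_injections)
  also have "\<dots> \<le> (\<Sum>x\<in>?I. ?H)"
  proof (rule sum_mono, clarify)
    fix \<phi> \<psi> assume \<phi>: "\<phi> \<in> injections ?k n" and \<psi>: "\<psi> \<in> injections l m"
    have "measure_pmf.prob (RIG n m P) {S. Q (\<phi>, \<psi>) S}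
        = (\<Prod>i<?k. measure_pmf.prob (attr_pmf m P) {X. \<psi> ` (Ns ! i) \<subseteq> X \<and> real (card X) \<le> T})"
      unfolding Q_def prod.case using \<phi>
      by (intro prob_RIG_injective) (auto simp: injections_def)
    also have "\<dots> \<le> ?H"
    proof (rule prod_mono, rule conjI)
      fix i assume i: "i \<in> {..<?k}"
      have sub: "Ns ! i \<subseteq> {..<l}" using Ns i by auto
      hence "card (\<psi> ` (Ns ! i)) = card (Ns ! i)" "\<psi> ` (Ns ! i) \<subseteq> {..<m}"
        using \<psi> by (auto simp: injections_def card_image inj_on_subset)
      thus "measure_pmf.prob (attr_pmf m P) {X. \<psi> ` (Ns ! i) \<subseteq> X \<and> real (card X) \<le> T}
          \<le> trunc_moment m P T (card (Ns ! i))"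
        using prob_attr_pmf_supset_le[OF P, of "\<psi> ` (Ns ! i)" T] by simp
    qed simp
    finally show "measure_pmf.prob (RIG n m P) {S. Q (\<phi>, \<psi>) S} \<le> ?H" .
  qed
  also have "\<dots> = real (card (injections ?k n)) * real (card (injections l m)) * ?H"
    by (simp add: card_cartesian_product)
  also have "\<dots> \<le> real n ^ ?k * real m ^ l * ?H"
    using card_injections_le[of ?k n] card_injections_le[of l m]
    by (intro mult_right_mono mult_mono prod_nonneg trunc_moment_nonneg)
       (simp_all flip: of_nat_power)
  finally show ?thesis .
qed

lemma trunc_moment_le_second_moment:
  assumes P: "set_pmf P \<subseteq> {..m}" and m: "m > 0" and n: "n > 0" and T: "T \<ge> 0" and d: "d \<ge> 2"
  shows "trunc_moment m P T d
         \<le> (T / real m) ^ (d - 2) * measure_pmf.expectation P (\<lambda>k. (Yval n m k)\<^sup>2) / (real n * real m)"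
proof -
  have fin: "finite (set_pmf P)" using P finite_subset by blast
  have ratio_sq: "(real k / real m)\<^sup>2 = (Yval n m k)\<^sup>2 / (real n * real m)" for k
    using m n unfolding Yval_def by (simp add: power_mult_distrib power2_eq_square field_simps)
  have "(if real k \<le> T then (real k / real m) ^ d else 0)
        \<le> (T / real m) ^ (d - 2) / (real n * real m) * (Yval n m k)\<^sup>2" for k
  proof (cases "real k \<le> T")
    case True
    have "(real k / real m) ^ d = (real k / real m) ^ (d - 2) * (real k / real m)\<^sup>2"
      using d by (metis le_add_diff_inverse2 power_add)
    also have "\<dots> \<le> (T / real m) ^ (d - 2) * (real k / real m)\<^sup>2"
      by (intro mult_right_mono power_mono divide_right_mono True) auto
    finally show ?thesis using True by (simp add: ratio_sq)
  qed (use T in simp)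
  hence "trunc_moment m P T d
      \<le> measure_pmf.expectation P (\<lambda>k. (T / real m) ^ (d - 2) / (real n * real m) * (Yval n m k)\<^sup>2)"
    unfolding trunc_moment_def by (intro integral_mono integrable_measure_pmf_finite[OF fin])
  thus ?thesis by simp
qed

lemma expectation_card_pattern_embeddings_le_second_moment:
  assumes P: "set_pmf P \<subseteq> {..m}" and m: "m > 0" and n: "n > 0" and T: "T \<ge> 0"
    and M: "measure_pmf.expectation P (\<lambda>k. (Yval n m k)\<^sup>2) \<le> M"
    and Ns: "\<forall>i<length Ns. Ns ! i \<subseteq> {..<l} \<and> 2 \<le> card (Ns ! i)"
  shows "measure_pmf.expectation (RIG n m P) (\<lambda>S. real (card (pattern_embeddings n m T Ns l S)))
         \<le> M ^ length Ns * real m ^ l * (T / real m) ^ (\<Sum>i<length Ns. card (Ns ! i) - 2)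
             / real m ^ length Ns"
proof -
  let ?k = "length Ns" and ?q = "M / (real n * real m)"
  have "(\<Prod>i<?k. trunc_moment m P T (card (Ns ! i))) \<le> (\<Prod>i<?k. (T / real m) ^ (card (Ns ! i) - 2) * ?q)"
  proof (intro prod_mono conjI trunc_moment_nonneg)
    fix i assume "i \<in> {..<?k}"
    hence "trunc_moment m P T (card (Ns ! i))
        \<le> (T / real m) ^ (card (Ns ! i) - 2) * measure_pmf.expectation P (\<lambda>k. (Yval n m k)\<^sup>2) / (real n * real m)"
      using Ns by (intro trunc_moment_le_second_moment[OF P m n T]) auto
    also have "\<dots> \<le> (T / real m) ^ (card (Ns ! i) - 2) * ?q"
      using M T m n by (simp add: divide_right_mono mult_left_mono)
    finally show "trunc_moment m P T (card (Ns ! i)) \<le> (T / real m) ^ (card (Ns ! i) - 2) * ?q" .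
  qed
  also have "\<dots> = (T / real m) ^ (\<Sum>i<?k. card (Ns ! i) - 2) * ?q ^ ?k"
    by (subst prod.distrib) (simp add: power_sum)
  finally have H: "(\<Prod>i<?k. trunc_moment m P T (card (Ns ! i)))
      \<le> (T / real m) ^ (\<Sum>i<?k. card (Ns ! i) - 2) * ?q ^ ?k" .
  have "measure_pmf.expectation (RIG n m P) (\<lambda>S. real (card (pattern_embeddings n m T Ns l S)))
      \<le> real n ^ ?k * real m ^ l * (\<Prod>i<?k. trunc_moment m P T (card (Ns ! i)))"
    using Ns by (intro expectation_card_pattern_embeddings_le[OF P]) auto
  also have "\<dots> \<le> real n ^ ?k * real m ^ l * ((T / real m) ^ (\<Sum>i<?k. card (Ns ! i) - 2) * ?q ^ ?k)"
    by (intro mult_left_mono H) simp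
  also have "\<dots> = M ^ ?k * real m ^ l * (T / real m) ^ (\<Sum>i<?k. card (Ns ! i) - 2) / real m ^ ?k"
    using m n by (simp add: power_divide power_mult_distrib)
  finally show ?thesis .
qed

lemma prob_nonempty_le_expectation_card:
  fixes p :: "'a pmf" and F :: "'a \<Rightarrow> 'b set"
  assumes "\<And>S. F S \<subseteq> I" "finite I"
  shows "measure_pmf.prob p {S. F S \<noteq> {}} \<le> measure_pmf.expectation p (\<lambda>S. real (card (F S)))"
proof -
  have "indicator {S. F S \<noteq> {}} S \<le> real (card (F S))" for S
    using assms by (auto simp: indicator_def Suc_le_eq card_gt_0_iff dest: finite_subset)
  moreover have "integrable p (\<lambda>S. real (card (F S)))"
    using assms
    by (intro measure_pmf.integrable_const_bound[where B = "card I"] AE_I2) (auto intro: card_mono)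
  ultimately show ?thesis
    unfolding prob_eq_expectation_indicator
    by (intro integral_mono integrable_real_indicator) (simp_all add: measure_pmf.emeasure_finite flip: less_top)
qed

text \<open>The value \<open>undefined\<close> beyond the last index makes \<open>list_fun xs\<close> extensional, as members of
  \<open>injections\<close> must be.\<close>
definition list_fun :: "nat list \<Rightarrow> nat \<Rightarrow> nat" where
  "list_fun xs i = (if i < length xs then xs ! i else undefined)"

lemma list_fun_injections:
  assumes "distinct xs" "set xs \<subseteq> {..<n}"
  shows "list_fun xs \<in> injections (length xs) n"
  using assms unfolding injections_def list_fun_def
  by (auto simp: PiE_def extensional_def inj_on_def nth_eq_iff_index_eq)
     (meson lessThan_iff nth_mem subsetD)

lemma finite_cliques: "finite {K. is_clique n S K}"
  by (rule finite_subset[of _ "Pow {..<n}"]) (auto simp: is_clique_def)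

lemma card_le_clique_number: "is_clique n S K \<Longrightarrow> card K \<le> clique_number n S"
  unfolding clique_number_def using finite_cliques by (intro Max_ge) auto

lemma clique_number_le:
  assumes "\<And>K. is_clique n S K \<Longrightarrow> card K \<le> b"
  shows "clique_number n S \<le> b"
proof -
  have "is_clique n S {}" by (simp add: is_clique_def)
  thus ?thesis unfolding clique_number_def using finite_cliques assms
    by (intro Max.boundedI) auto
qed

lemma card_attribute_class_le_mono_clique_number:
  "w < m \<Longrightarrow> card {v\<in>{..<n}. w \<in> S v} \<le> mono_clique_number n m S"
  unfolding mono_clique_number_def by (intro Max_ge) auto

lemma mono_clique_number_le_clique_number: "mono_clique_number n m S \<le> clique_number n S"
  unfolding mono_clique_number_def
proof (intro Max.boundedI)
  fix x assume "x \<in> insert 0 ((\<lambda>w. card {v\<in>{..<n}. w \<in> S v}) ` {..<m})"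
  moreover have "is_clique n S {v\<in>{..<n}. w \<in> S v}" for w
    unfolding is_clique_def by auto
  ultimately show "x \<le> clique_number n S"
    using card_le_clique_number by auto
qed auto

definition pattern_roots :: "nat \<Rightarrow> nat \<Rightarrow> real \<Rightarrow> (nat \<Rightarrow> nat set) \<Rightarrow> nat set" where
  "pattern_roots n m T S = (\<lambda>(\<phi>, \<psi>). \<phi> 0) `
     (pattern_embeddings n m T [{0,1},{0,1}] 2 S \<union> pattern_embeddings n m T [{0,2},{0,1},{1,2}] 3 S)"

lemma card_pattern_roots_le:
  "card (pattern_roots n m T S)
   \<le> card (pattern_embeddings n m T [{0,1},{0,1}] 2 S)
      + card (pattern_embeddings n m T [{0,2},{0,1},{1,2}] 3 S)"
  unfolding pattern_roots_def
  by (rule order.trans[OF card_image_le card_Un_le]) (simp add: finite_pattern_embeddings)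

context
  fixes n m :: nat and T :: real and S :: "nat \<Rightarrow> nat set" and K :: "nat set"
  assumes clique: "is_clique n S K"
    and attributes: "\<forall>v\<in>K. S v \<subseteq> {..<m} \<and> real (card (S v)) \<le> T"
begin

lemma clique_adjacent:
  assumes "u \<in> K" "v \<in> K" "u \<noteq> v"
  obtains a where "a \<in> S u" "a \<in> S v"
  using clique assms unfolding is_clique_def by blast

lemma list_fun_in_pattern_embeddings:
  assumes vs: "distinct vs" "set vs \<subseteq> K" "length Ns = length vs"
    and as: "distinct as" "length as = l" "set as \<subseteq> \<Union> (S ` K)"
    and Ns: "\<forall>i<length Ns. Ns ! i \<subseteq> {..<l} \<and> (\<forall>j\<in>Ns ! i. as ! j \<in> S (vs ! i))"
  shows "(list_fun vs, list_fun as) \<in> pattern_embeddings n m T Ns l S"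
proof -
  have "set vs \<subseteq> {..<n}" using vs(2) clique by (auto simp: is_clique_def)
  hence "list_fun vs \<in> injections (length Ns) n" using list_fun_injections vs by simp
  moreover have "set as \<subseteq> {..<m}" using as(3) attributes by blast
  hence "list_fun as \<in> injections l m" using list_fun_injections as by blast
  moreover have "list_fun as ` (Ns ! i) \<subseteq> S (list_fun vs i) \<and> real (card (S (list_fun vs i))) \<le> T"
    if "i < length Ns" for i
    using that Ns vs as(2) attributes nth_mem[of i vs] by (fastforce simp: list_fun_def)
  ultimately show ?thesis unfolding pattern_embeddings_def by simp
qed

lemma root_if_not_attribute:
  assumes uv: "u \<in> K" "v \<in> K" "u \<noteq> v" "a \<in> S u" "a \<in> S v"
    and y: "y \<in> K" "a \<notin> S y"
  shows "u \<in> pattern_roots n m T S"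
proof -
  have yuv: "y \<noteq> u" "y \<noteq> v" using uv y by auto
  obtain c where c: "c \<in> S u" "c \<in> S y" using clique_adjacent[OF uv(1) y(1)] yuv by metis
  obtain b where b: "b \<in> S v" "b \<in> S y" using clique_adjacent[OF uv(2) y(1)] yuv by metis
  have "a \<noteq> b" "a \<noteq> c" using b c y by auto
  show ?thesis
  proof (cases "b = c")
    case True
    have "(list_fun [u,v], list_fun [a,b]) \<in> pattern_embeddings n m T [{0,1},{0,1}] 2 S"
      by (rule list_fun_in_pattern_embeddings)
         (use uv y b c True \<open>a \<noteq> b\<close> in \<open>auto simp: less_Suc_eq numeral_eq_Suc\<close>)
    thus ?thesis unfolding pattern_roots_def by (force simp: list_fun_def)
  next
    case False
    have "(list_fun [u,v,y], list_fun [a,b,c]) \<in> pattern_embeddings n m T [{0,2},{0,1},{1,2}] 3 S"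
      by (rule list_fun_in_pattern_embeddings)
         (use uv y yuv b c False \<open>a \<noteq> b\<close> \<open>a \<noteq> c\<close> in \<open>auto simp: less_Suc_eq numeral_eq_Suc\<close>)
    thus ?thesis unfolding pattern_roots_def by (force simp: list_fun_def)
  qed
qed

lemma card_clique_le_pattern_roots:
  "card K \<le> card (pattern_roots n m T S) + max 1 (mono_clique_number n m S)"
proof -
  have K: "K \<subseteq> {..<n}" using clique by (simp add: is_clique_def)
  hence "finite K" by (rule finite_subset) simp
  let ?K' = "K - pattern_roots n m T S"
  have "card ?K' \<le> max 1 (mono_clique_number n m S)"
  proof (cases "card ?K' \<le> 1")
    case False
    then obtain u v where uv: "u \<in> ?K'" "v \<in> ?K'" "u \<noteq> v"
      using \<open>finite K\<close> by (auto simp: card_le_Suc0_iff_eq)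
    then obtain a where a: "a \<in> S u" "a \<in> S v"
      using clique_adjacent by (metis DiffD1)
    have "?K' \<subseteq> {y\<in>{..<n}. a \<in> S y}"
      using root_if_not_attribute[of u v a] uv a K by blast
    hence "card ?K' \<le> card {y\<in>{..<n}. a \<in> S y}" by (intro card_mono) auto
    also have "\<dots> \<le> mono_clique_number n m S"
      using a uv attributes by (intro card_attribute_class_le_mono_clique_number) auto
    finally show ?thesis by simp
  qed simp
  moreover have "card K \<le> card (pattern_roots n m T S) + card ?K'"
  proof -
    have "finite (pattern_roots n m T S)"
      unfolding pattern_roots_def by (simp add: finite_pattern_embeddings)
    hence "card (K \<inter> pattern_roots n m T S) \<le> card (pattern_roots n m T S)"
      by (simp add: card_mono)
    moreover have "card K \<le> card (K \<inter> pattern_roots n m T S) + card ?K'"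
      by (metis Int_Diff_Un card_Un_le)
    ultimately show ?thesis by linarith
  qed
  ultimately show ?thesis by simp
qed

lemma double_edge_neighbour:
  assumes no_B1: "pattern_embeddings n m T [{0,1,2},{0,1,2}] 3 S = {}"
    and no_B4: "pattern_embeddings n m T [{0,1,2},{0,1,3},{2,3}] 4 S = {}"
    and uv: "u \<in> K" "v \<in> K" "u \<noteq> v"
    and ab: "a \<noteq> b" "a \<in> S u" "a \<in> S v" "b \<in> S u" "b \<in> S v"
    and y: "y \<in> K" "y \<noteq> u" "y \<noteq> v"
  shows "a \<in> S y \<or> b \<in> S y"
proof (rule ccontr)
  assume nab: "\<not> (a \<in> S y \<or> b \<in> S y)"
  obtain \<alpha> where \<alpha>: "\<alpha> \<in> S y" "\<alpha> \<in> S u" using clique_adjacent y uv by metis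
  obtain \<beta> where \<beta>: "\<beta> \<in> S y" "\<beta> \<in> S v" using clique_adjacent y uv by metis
  show False
  proof (cases "\<alpha> = \<beta>")
    case True
    have "(list_fun [u,v], list_fun [a,b,\<alpha>]) \<in> pattern_embeddings n m T [{0,1,2},{0,1,2}] 3 S"
      by (rule list_fun_in_pattern_embeddings)
         (use uv ab \<alpha> \<beta> True nab in \<open>auto simp: less_Suc_eq numeral_eq_Suc\<close>)
    thus False using no_B1 by simp
  next
    case False
    have "(list_fun [u,v,y], list_fun [a,b,\<alpha>,\<beta>]) \<in> pattern_embeddings n m T [{0,1,2},{0,1,3},{2,3}] 4 S"
      by (rule list_fun_in_pattern_embeddings)
         (use uv y ab \<alpha> \<beta> False nab in \<open>auto simp: less_Suc_eq numeral_eq_Suc\<close>)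
    thus False using no_B4 by simp
  qed
qed

lemma common_attribute_of_double_edge:
  assumes no_B1: "pattern_embeddings n m T [{0,1,2},{0,1,2}] 3 S = {}"
    and no_B2: "pattern_embeddings n m T [{0,1},{0,1},{0,1}] 2 S = {}"
    and no_B3: "pattern_embeddings n m T [{0,1},{0,1},{0,2},{1,2}] 3 S = {}"
    and no_B4: "pattern_embeddings n m T [{0,1,2},{0,1,3},{2,3}] 4 S = {}"
    and uv: "u \<in> K" "v \<in> K" "u \<noteq> v"
    and ab: "a \<noteq> b" "a \<in> S u" "a \<in> S v" "b \<in> S u" "b \<in> S v"
  shows "\<exists>c. \<forall>y\<in>K. c \<in> S y"
proof -
  note a_or_b = double_edge_neighbour[OF no_B1 no_B4 uv ab]
  have not_both: "\<not> (a \<in> S y \<and> b \<in> S y)" if y: "y \<in> K" "y \<noteq> u" "y \<noteq> v" for y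
  proof
    assume "a \<in> S y \<and> b \<in> S y"
    hence "(list_fun [u,v,y], list_fun [a,b]) \<in> pattern_embeddings n m T [{0,1},{0,1},{0,1}] 2 S"
      by (intro list_fun_in_pattern_embeddings) (use uv y ab in \<open>auto simp: less_Suc_eq numeral_eq_Suc\<close>)
    thus False using no_B2 by simp
  qed
  have not_split: False
    if y: "y \<in> K" "y \<noteq> u" "y \<noteq> v" "a \<in> S y" and y': "y' \<in> K" "y' \<noteq> u" "y' \<noteq> v" "b \<in> S y'"
    for y y'
  proof -
    have "b \<notin> S y" "a \<notin> S y'" using not_both y y' by auto
    hence "y \<noteq> y'" using y by auto
    then obtain p where p: "p \<in> S y" "p \<in> S y'" using clique_adjacent y y' by metis
    have "(list_fun [u,v,y,y'], list_fun [a,b,p]) \<in> pattern_embeddings n m T [{0,1},{0,1},{0,2},{1,2}] 3 S"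
      by (rule list_fun_in_pattern_embeddings)
         (use uv y y' \<open>y \<noteq> y'\<close> ab p \<open>b \<notin> S y\<close> \<open>a \<notin> S y'\<close>
           in \<open>auto simp: less_Suc_eq numeral_eq_Suc\<close>)
    thus False using no_B3 by simp
  qed
  show ?thesis
  proof (cases "\<forall>y\<in>K. a \<in> S y")
    case False
    then obtain y0 where y0: "y0 \<in> K" "a \<notin> S y0" by auto
    hence "y0 \<noteq> u" "y0 \<noteq> v" "b \<in> S y0" using a_or_b ab by auto
    hence "\<forall>y\<in>K. b \<in> S y" using a_or_b not_split y0 ab by metis
    thus ?thesis by blast
  qed blast
qed

lemma common_attribute_of_star:
  assumes no_B5: "pattern_embeddings n m T [{0,1},{0,2},{0,3},{1,2,3}] 4 S = {}"
    and linear: "\<And>u v a b. u \<in> K \<Longrightarrow> v \<in> K \<Longrightarrow> u \<noteq> v \<Longrightarrow>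
                   a \<in> S u \<Longrightarrow> a \<in> S v \<Longrightarrow> b \<in> S u \<Longrightarrow> b \<in> S v \<Longrightarrow> a = b"
    and x: "distinct [x1,x2,x3]" "{x1,x2,x3} \<subseteq> K" and a: "a \<in> S x1" "a \<in> S x2" "a \<in> S x3"
  shows "\<forall>y\<in>K. a \<in> S y"
proof (rule ccontr)
  assume "\<not> ?thesis"
  then obtain y where y: "y \<in> K" "a \<notin> S y" by blast
  hence "y \<noteq> x1" "y \<noteq> x2" "y \<noteq> x3" using a by auto
  then obtain b1 b2 b3 where b: "b1 \<in> S x1" "b1 \<in> S y" "b2 \<in> S x2" "b2 \<in> S y" "b3 \<in> S x3" "b3 \<in> S y"
    using clique_adjacent x y by (metis insert_subset)
  have "b1 \<noteq> b2" "b1 \<noteq> b3" "b2 \<noteq> b3" "a \<noteq> b1" "a \<noteq> b2" "a \<noteq> b3"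
    using linear x a b y by (auto simp: insert_subset)
  hence "(list_fun [x1,x2,x3,y], list_fun [a,b1,b2,b3]) \<in> pattern_embeddings n m T [{0,1},{0,2},{0,3},{1,2,3}] 4 S"
    by (intro list_fun_in_pattern_embeddings) (use x y a b in \<open>auto simp: less_Suc_eq numeral_eq_Suc\<close>)
  thus False using no_B5 by simp
qed

lemma attribute_of_three_vertices:
  assumes no_B6: "pattern_embeddings n m T [{0,2,3},{0,1,4},{1,2,5},{3,4,5}] 6 S = {}"
    and K4: "card K \<ge> 4"
  shows "\<exists>a x1 x2 x3. distinct [x1,x2,x3] \<and> {x1,x2,x3} \<subseteq> K \<and> a \<in> S x1 \<and> a \<in> S x2 \<and> a \<in> S x3"
proof (rule ccontr)
  assume no_triple: "\<not> ?thesis"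
  obtain u0 u1 u2 u3 where u: "distinct [u0,u1,u2,u3]" "{u0,u1,u2,u3} \<subseteq> K"
  proof -
    obtain F where F: "F \<subseteq> K" "card F = 4" using K4 by (meson obtain_subset_with_card_n)
    then obtain a b c d where "F = {a,b,c,d}" "distinct [a,b,c,d]"
      by (auto simp: numeral_eq_Suc card_Suc_eq)
    thus ?thesis using that F by auto
  qed
  have edge: "\<exists>e. e \<in> S x \<and> e \<in> S y" if "x \<in> {u0,u1,u2,u3}" "y \<in> {u0,u1,u2,u3}" "x \<noteq> y" for x y
    using clique_adjacent that u(2) by (metis subsetD)
  obtain e01 e02 e03 e12 e13 e23 where e:
    "e01 \<in> S u0" "e01 \<in> S u1" "e02 \<in> S u0" "e02 \<in> S u2" "e03 \<in> S u0" "e03 \<in> S u3"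
    "e12 \<in> S u1" "e12 \<in> S u2" "e13 \<in> S u1" "e13 \<in> S u3" "e23 \<in> S u2" "e23 \<in> S u3"
    using edge u(1) by (simp, metis)
  have "distinct [e01, e12, e02, e03, e13, e23]"
    using no_triple u e by (auto simp: insert_subset)
  hence "(list_fun [u0,u1,u2,u3], list_fun [e01, e12, e02, e03, e13, e23])
         \<in> pattern_embeddings n m T [{0,2,3},{0,1,4},{1,2,5},{3,4,5}] 6 S"
    by (intro list_fun_in_pattern_embeddings) (use u e in \<open>auto simp: less_Suc_eq numeral_eq_Suc\<close>)
  thus False using no_B6 by simp
qed

end

definition bad_patterns :: "(nat set list \<times> nat) list" where
  "bad_patterns =
     [([{0,1,2},{0,1,2}], 3), ([{0,1},{0,1},{0,1}], 2), ([{0,1},{0,1},{0,2},{1,2}], 3),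
      ([{0,1,2},{0,1,3},{2,3}], 4), ([{0,1},{0,2},{0,3},{1,2,3}], 4),
      ([{0,2,3},{0,1,4},{1,2,5},{3,4,5}], 6)]"

lemma common_attribute_of_large_clique:
  assumes clique: "is_clique n S K"
    and attributes: "\<forall>v\<in>K. S v \<subseteq> {..<m} \<and> real (card (S v)) \<le> T"
    and no_bad: "\<forall>(Ns, l)\<in>set bad_patterns. pattern_embeddings n m T Ns l S = {}"
    and K4: "card K \<ge> 4"
  shows "\<exists>c. \<forall>y\<in>K. c \<in> S y"
proof -
  have B: "pattern_embeddings n m T [{0,1,2},{0,1,2}] 3 S = {}"
    "pattern_embeddings n m T [{0,1},{0,1},{0,1}] 2 S = {}"
    "pattern_embeddings n m T [{0,1},{0,1},{0,2},{1,2}] 3 S = {}"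
    "pattern_embeddings n m T [{0,1,2},{0,1,3},{2,3}] 4 S = {}"
    "pattern_embeddings n m T [{0,1},{0,2},{0,3},{1,2,3}] 4 S = {}"
    "pattern_embeddings n m T [{0,2,3},{0,1,4},{1,2,5},{3,4,5}] 6 S = {}"
    using no_bad unfolding bad_patterns_def by simp_all
  show ?thesis
  proof (cases "\<exists>u v a b. u \<in> K \<and> v \<in> K \<and> u \<noteq> v \<and> a \<noteq> b \<and>
                  a \<in> S u \<and> a \<in> S v \<and> b \<in> S u \<and> b \<in> S v")
    case True
    then obtain u v a b
      where "u \<in> K" "v \<in> K" "u \<noteq> v" "a \<noteq> b" "a \<in> S u" "a \<in> S v" "b \<in> S u" "b \<in> S v"
      by blast
    thus ?thesis by (rule common_attribute_of_double_edge[OF clique attributes B(1-4)])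
  next
    case False
    obtain a x1 x2 x3 where star: "distinct [x1,x2,x3]" "{x1,x2,x3} \<subseteq> K"
      "a \<in> S x1" "a \<in> S x2" "a \<in> S x3"
      using attribute_of_three_vertices[OF clique attributes B(6) K4] by blast
    have "\<forall>y\<in>K. a \<in> S y"
      by (rule common_attribute_of_star[OF clique attributes B(5) _ star]) (use False in blast)
    thus ?thesis by blast
  qed
qed

lemma clique_number_le_if_no_bad_patterns:
  assumes attributes: "\<forall>v<n. S v \<subseteq> {..<m} \<and> real (card (S v)) \<le> T"
    and no_bad: "\<forall>(Ns, l)\<in>set bad_patterns. pattern_embeddings n m T Ns l S = {}"
  shows "clique_number n S \<le> max 3 (mono_clique_number n m S)"
proof (rule clique_number_le)
  fix K assume K: "is_clique n S K"
  hence K_attributes: "\<forall>v\<in>K. S v \<subseteq> {..<m} \<and> real (card (S v)) \<le> T"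
    using attributes by (auto simp: is_clique_def)
  show "card K \<le> max 3 (mono_clique_number n m S)"
  proof (cases "card K \<ge> 4")
    case True
    then obtain c where c: "\<forall>y\<in>K. c \<in> S y"
      using common_attribute_of_large_clique[OF K K_attributes no_bad] by blast
    obtain y where "y \<in> K" using True by (metis card.empty ex_in_conv not_numeral_le_zero)
    hence "c < m" using c K_attributes by blast
    have "card K \<le> card {v\<in>{..<n}. c \<in> S v}"
      using K c by (intro card_mono) (auto simp: is_clique_def)
    also have "\<dots> \<le> mono_clique_number n m S"
      using \<open>c < m\<close> by (rule card_attribute_class_le_mono_clique_number)
    finally show ?thesis by simp
  qed simp
qed

lemma clique_number_le_pattern_roots:
  assumes "\<forall>v<n. S v \<subseteq> {..<m}"
  shows "clique_number n S \<le> card (pattern_roots n m (real m) S) + max 1 (mono_clique_number n m S)"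
proof (rule clique_number_le)
  fix K assume K: "is_clique n S K"
  have "\<forall>v\<in>K. S v \<subseteq> {..<m} \<and> real (card (S v)) \<le> real m"
  proof
    fix v assume "v \<in> K"
    hence "S v \<subseteq> {..<m}" using K assms by (auto simp: is_clique_def)
    thus "S v \<subseteq> {..<m} \<and> real (card (S v)) \<le> real m" using card_mono[of "{..<m}" "S v"] by simp
  qed
  thus "card K \<le> card (pattern_roots n m (real m) S) + max 1 (mono_clique_number n m S)"
    by (rule card_clique_le_pattern_roots[OF K])
qed

lemma integrable_card_pattern_embeddings:
  "integrable (measure_pmf p) (\<lambda>S. real (card (pattern_embeddings n m T Ns l S)))"
proof (intro measure_pmf.integrable_const_bound AE_I2)
  let ?I = "injections (length Ns) n \<times> injections l m"
  fix S
  have "pattern_embeddings n m T Ns l S \<subseteq> ?I" unfolding pattern_embeddings_def by auto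
  hence "card (pattern_embeddings n m T Ns l S) \<le> card ?I" by (intro card_mono) (simp_all add: finite_injections)
  thus "norm (real (card (pattern_embeddings n m T Ns l S))) \<le> card ?I" by simp
qed simp

lemma prob_pattern_embeddings_nonempty_le:
  "measure_pmf.prob p {S. pattern_embeddings n m T Ns l S \<noteq> {}}
   \<le> measure_pmf.expectation p (\<lambda>S. real (card (pattern_embeddings n m T Ns l S)))"
  by (rule prob_nonempty_le_expectation_card[where I = "injections (length Ns) n \<times> injections l m"])
     (auto simp: pattern_embeddings_def finite_injections)

lemma prob_attribute_set_gt_le:
  assumes "set_pmf P \<subseteq> {..m}"
  shows "measure_pmf.prob (RIG n m P) {S. \<exists>v<n. real (card (S v)) > T}
         \<le> real n * measure_pmf.prob P {k. real k > T}"
proof -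
  have marginal: "measure_pmf.prob (RIG n m P) {S. real (card (S v)) > T} = measure_pmf.prob P {k. real k > T}"
    if "v < n" for v
  proof -
    have "map_pmf (\<lambda>S. S v) (RIG n m P) = attr_pmf m P"
      using that unfolding RIG_def by (simp add: Pi_pmf_component)
    have "measure_pmf.prob (RIG n m P) {S. real (card (S v)) > T}
        = measure_pmf.prob (map_pmf (\<lambda>S. S v) (RIG n m P)) {S. real (card S) > T}"
      by (simp add: vimage_def)
    also have "\<dots> = measure_pmf.prob P {k. real k > T}"
      using prob_attr_pmf_card_gt[OF assms] \<open>map_pmf (\<lambda>S. S v) (RIG n m P) = attr_pmf m P\<close> by simp
    finally show ?thesis .
  qed
  have union: "{S. \<exists>v<n. real (card (S v)) > T} = (\<Union>v<n. {S. real (card (S v)) > T})"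
    by auto
  have "measure_pmf.prob (RIG n m P) {S. \<exists>v<n. real (card (S v)) > T}
      \<le> (\<Sum>v<n. measure_pmf.prob (RIG n m P) {S. real (card (S v)) > T})"
    unfolding union by (rule measure_pmf.finite_measure_subadditive_finite) simp_all
  also have "\<dots> = real n * measure_pmf.prob P {k. real k > T}"
    using marginal by simp
  finally show ?thesis .
qed

lemma clique_gap_le_pattern_counts:
  assumes "\<forall>v<n. S v \<subseteq> {..<m}"
  shows "\<bar>real (clique_number n S) - real (mono_clique_number n m S)\<bar>
         \<le> 1 + real (card (pattern_embeddings n m (real m) [{0,1},{0,1}] 2 S))
             + real (card (pattern_embeddings n m (real m) [{0,2},{0,1},{1,2}] 3 S))"
  using clique_number_le_pattern_roots[OF assms] card_pattern_roots_le[of n m "real m" S]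
    mono_clique_number_le_clique_number[of n m S]
  by linarith

lemma expectation_cross_pattern_counts_le:
  assumes P: "set_pmf P \<subseteq> {..m}" and m: "m > 0" and n: "n > 0"
    and M: "measure_pmf.expectation P (\<lambda>k. (Yval n m k)\<^sup>2) \<le> M"
  shows "measure_pmf.expectation (RIG n m P)
           (\<lambda>S. real (card (pattern_embeddings n m (real m) [{0,1},{0,1}] 2 S))
              + real (card (pattern_embeddings n m (real m) [{0,2},{0,1},{1,2}] 3 S)))
         \<le> M ^ 2 + M ^ 3"
proof -
  have "measure_pmf.expectation (RIG n m P)
          (\<lambda>S. real (card (pattern_embeddings n m (real m) [{0,1},{0,1}] 2 S))
             + real (card (pattern_embeddings n m (real m) [{0,2},{0,1},{1,2}] 3 S)))
      = measure_pmf.expectation (RIG n m P) (\<lambda>S. real (card (pattern_embeddings n m (real m) [{0,1},{0,1}] 2 S)))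
      + measure_pmf.expectation (RIG n m P) (\<lambda>S. real (card (pattern_embeddings n m (real m) [{0,2},{0,1},{1,2}] 3 S)))"
    by (intro Bochner_Integration.integral_add integrable_card_pattern_embeddings)
  also have "\<dots> \<le> M ^ 2 + M ^ 3"
    using expectation_card_pattern_embeddings_le_second_moment[OF P m n _ M, of "real m" "[{0,1},{0,1}]" 2]
      expectation_card_pattern_embeddings_le_second_moment[OF P m n _ M, of "real m" "[{0,2},{0,1},{1,2}]" 3] m
    by (simp add: less_Suc_eq numeral_eq_Suc card_insert_if lessThan_Suc)
  finally show ?thesis .
qed

lemma prob_clique_gap_gt_le:
  assumes P: "set_pmf P \<subseteq> {..m}" and m: "m > 0" and n: "n > 0"
    and M: "measure_pmf.expectation P (\<lambda>k. (Yval n m k)\<^sup>2) \<le> M" and K: "K > 1"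
  shows "measure_pmf.prob (RIG n m P)
           {S. \<bar>real (clique_number n S) - real (mono_clique_number n m S)\<bar> > K}
         \<le> (M ^ 2 + M ^ 3) / (K - 1)"
proof -
  define c where "c S = real (card (pattern_embeddings n m (real m) [{0,1},{0,1}] 2 S))
      + real (card (pattern_embeddings n m (real m) [{0,2},{0,1},{1,2}] 3 S))" for S
  have "measure_pmf.prob (RIG n m P)
          {S. \<bar>real (clique_number n S) - real (mono_clique_number n m S)\<bar> > K}
      \<le> measure_pmf.prob (RIG n m P) {S. K - 1 \<le> c S}"
  proof (intro measure_pmf.finite_measure_mono_AE AE_pmfI impI)
    fix S assume "S \<in> set_pmf (RIG n m P)"
      and "S \<in> {S. \<bar>real (clique_number n S) - real (mono_clique_number n m S)\<bar> > K}"
    moreover have "\<forall>v<n. S v \<subseteq> {..<m}" using set_pmf_RIG[OF P] calculation(1) by blast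
    ultimately show "S \<in> {S. K - 1 \<le> c S}"
      using clique_gap_le_pattern_counts[of n S m] by (simp add: c_def)
  qed simp
  also have "\<dots> \<le> measure_pmf.expectation (RIG n m P) c / (K - 1)"
  proof -
    have "integrable (measure_pmf (RIG n m P)) c"
      unfolding c_def by (intro Bochner_Integration.integrable_add integrable_card_pattern_embeddings)
    moreover have "AE S in measure_pmf (RIG n m P). 0 \<le> c S" by (simp add: c_def)
    ultimately show ?thesis
      using integral_Markov_inequality_measure[of "RIG n m P" c "{}" "K - 1"] K by simp
  qed
  also have "\<dots> \<le> (M ^ 2 + M ^ 3) / (K - 1)"
    using expectation_cross_pattern_counts_le[OF P m n M] K
    unfolding c_def by (simp add: divide_right_mono)
  finally show ?thesis .
qed

lemma prob_clique_number_gt_le: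
  assumes P: "set_pmf P \<subseteq> {..m}"
  shows "measure_pmf.prob (RIG n m P) {S. clique_number n S > max 3 (mono_clique_number n m S)}
         \<le> measure_pmf.prob (RIG n m P) {S. \<exists>v<n. real (card (S v)) > T}
           + (\<Sum>(Ns, l)\<in>set bad_patterns.
                measure_pmf.prob (RIG n m P) {S. pattern_embeddings n m T Ns l S \<noteq> {}})"
proof -
  let ?p = "measure_pmf.prob (RIG n m P)"
  let ?E = "\<lambda>(Ns, l). {S. pattern_embeddings n m T Ns l S \<noteq> {}}"
  have "?p {S. clique_number n S > max 3 (mono_clique_number n m S)}
      \<le> ?p ({S. \<exists>v<n. real (card (S v)) > T} \<union> (\<Union>b\<in>set bad_patterns. ?E b))"
  proof (intro measure_pmf.finite_measure_mono_AE AE_pmfI)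
    fix S assume S: "S \<in> set_pmf (RIG n m P)"
    show "S \<in> {S. clique_number n S > max 3 (mono_clique_number n m S)} \<longrightarrow>
          S \<in> {S. \<exists>v<n. real (card (S v)) > T} \<union> (\<Union>b\<in>set bad_patterns. ?E b)"
    proof (rule impI, rule ccontr)
      assume "S \<notin> {S. \<exists>v<n. real (card (S v)) > T} \<union> (\<Union>b\<in>set bad_patterns. ?E b)"
      hence "\<forall>v<n. S v \<subseteq> {..<m} \<and> real (card (S v)) \<le> T"
        and "\<forall>(Ns, l)\<in>set bad_patterns. pattern_embeddings n m T Ns l S = {}"
        using set_pmf_RIG[OF P S] by auto
      hence "clique_number n S \<le> max 3 (mono_clique_number n m S)"
        by (rule clique_number_le_if_no_bad_patterns)
      moreover assume "S \<in> {S. clique_number n S > max 3 (mono_clique_number n m S)}"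
      ultimately show False by (simp add: max_def split: if_split_asm)
    qed
  qed simp
  also have "\<dots> \<le> ?p {S. \<exists>v<n. real (card (S v)) > T} + ?p (\<Union>b\<in>set bad_patterns. ?E b)"
    by (rule measure_Un_le) auto
  also have "?p (\<Union>b\<in>set bad_patterns. ?E b) \<le> (\<Sum>b\<in>set bad_patterns. ?p (?E b))"
    by (rule measure_pmf.finite_measure_subadditive_finite) auto
  finally show ?thesis by (simp add: case_prod_unfold)
qed

lemma second_moment_le:
  fixes f :: "'a \<Rightarrow> real"
  assumes "finite (set_pmf p)"
    and "\<bar>measure_pmf.expectation p f\<bar> \<le> B" and "\<bar>measure_pmf.variance p f\<bar> \<le> B"
  shows "measure_pmf.expectation p (\<lambda>x. (f x)\<^sup>2) \<le> B + B\<^sup>2"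
proof -
  have "measure_pmf.variance p f = measure_pmf.expectation p (\<lambda>x. (f x)\<^sup>2) - (measure_pmf.expectation p f)\<^sup>2"
    using integrable_measure_pmf_finite[OF assms(1)] by (intro measure_pmf.variance_eq)
  moreover have "(measure_pmf.expectation p f)\<^sup>2 \<le> B\<^sup>2"
    using assms(2) by (metis abs_ge_zero power2_abs power_mono)
  ultimately show ?thesis using assms(3) by linarith
qed

lemma second_moment_eventually_bounded:
  assumes "RIG_seq m P" "condA m P" "var_bounded m P"
  obtains M where "M \<ge> 0" "\<forall>\<^sub>F n in sequentially.
    m n > 0 \<and> n > 0 \<and> measure_pmf.expectation (P n) (\<lambda>k. (Yval n (m n) k)\<^sup>2) \<le> M"
proof -
  have P: "set_pmf (P n) \<subseteq> {..m n}" for n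
    using assms(1) unfolding RIG_seq_def by auto
  have m_lim: "filterlim m at_top sequentially"
    using assms(1) unfolding RIG_seq_def by auto
  obtain B1 B2
    where "\<forall>\<^sub>F n in sequentially. \<bar>measure_pmf.expectation (P n) (Yval n (m n))\<bar> \<le> B1"
      and "\<forall>\<^sub>F n in sequentially. \<bar>measure_pmf.variance (P n) (Yval n (m n))\<bar> \<le> B2"
    using assms(2,3) unfolding condA_def var_bounded_def by blast
  moreover have "\<forall>\<^sub>F n in sequentially. m n \<ge> 1"
    using m_lim by (simp add: filterlim_at_top)
  ultimately have "\<forall>\<^sub>F n in sequentially. m n > 0 \<and> n > 0 \<and>
      measure_pmf.expectation (P n) (\<lambda>k. (Yval n (m n) k)\<^sup>2) \<le> max 0 (max B1 B2 + (max B1 B2)\<^sup>2)"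
    using eventually_gt_at_top[of 0]
  proof eventually_elim
    case (elim n)
    have "finite (set_pmf (P n))" using P finite_subset by blast
    hence "measure_pmf.expectation (P n) (\<lambda>k. (Yval n (m n) k)\<^sup>2) \<le> max B1 B2 + (max B1 B2)\<^sup>2"
      using elim by (intro second_moment_le) auto
    thus ?case using elim by auto
  qed
  thus ?thesis by (intro that) auto
qed

lemma power_rescale_eq:
  fixes s x e c :: real and k l d j :: nat
  assumes s: "s > 0" and x: "x = s\<^sup>2" and jd: "2 * k + d = j + 2 * l"
  shows "c * x ^ l * (e * s / x) ^ d / x ^ k = c * (e ^ d * inverse s ^ j)"
proof -
  have pw: "x ^ k * s ^ d = s ^ j * x ^ l" unfolding x by (metis jd power_add power_mult)
  have "e * s / x = e / s" using s by (simp add: x power2_eq_square)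
  hence "c * x ^ l * (e * s / x) ^ d / x ^ k = c * (e ^ d * x ^ l / (x ^ k * s ^ d))"
    by (simp add: power_divide mult_ac)
  also have "\<dots> = c * (e ^ d * x ^ l / (s ^ j * x ^ l))" by (simp only: pw)
  also have "\<dots> = c * (e ^ d / s ^ j)" using s x by simp
  finally show ?thesis by (simp add: power_inverse divide_inverse)
qed

text \<open>At \<open>T = \<epsilon>\<^sub>n m^(1/2)\<close> the second-moment bound on the expected number of embeddings
  equals \<open>M^k \<epsilon>\<^sub>n^d m^(-j/2)\<close> with \<open>d = \<Sigma>\<^sub>i (|N\<^sub>i| - 2)\<close> and \<open>j = 2k + d - 2l\<close>.\<close>
lemma prob_pattern_embeddings_tendsto_0:
  fixes m :: "nat \<Rightarrow> nat" and P :: "nat \<Rightarrow> nat pmf" and eps :: "nat \<Rightarrow> real"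
  assumes P: "\<And>n. set_pmf (P n) \<subseteq> {..m n}"
    and M: "\<forall>\<^sub>F n in sequentially.
              m n > 0 \<and> n > 0 \<and> measure_pmf.expectation (P n) (\<lambda>k. (Yval n (m n) k)\<^sup>2) \<le> M"
    and m_lim: "filterlim m at_top sequentially"
    and eps: "\<And>n. eps n \<ge> 0" "eps \<longlonglongrightarrow> 0"
    and Ns: "\<forall>i<length Ns. Ns ! i \<subseteq> {..<l} \<and> 2 \<le> card (Ns ! i)"
    and sparse: "2 * l \<le> 2 * length Ns + (\<Sum>i<length Ns. card (Ns ! i) - 2)"
      "0 < (\<Sum>i<length Ns. card (Ns ! i) - 2) \<or> l < length Ns"
  shows "(\<lambda>n. measure_pmf.prob (RIG n (m n) (P n))
            {S. pattern_embeddings n (m n) (eps n * sqrt (real (m n))) Ns l S \<noteq> {}}) \<longlonglongrightarrow> 0"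
proof -
  let ?k = "length Ns"
  define d where "d = (\<Sum>i<?k. card (Ns ! i) - 2)"
  define j where "j = 2 * ?k + d - 2 * l"
  define g where "g n = M ^ ?k * (eps n ^ d * inverse (sqrt (real (m n))) ^ j)" for n
  have "(\<lambda>n. inverse (sqrt (real (m n)))) \<longlonglongrightarrow> 0"
    by (intro tendsto_inverse_0_at_top filterlim_compose[OF sqrt_at_top]
        filterlim_compose[OF filterlim_real_sequentially m_lim])
  hence "g \<longlonglongrightarrow> M ^ ?k * (0 ^ d * 0 ^ j)"
    unfolding g_def by (intro tendsto_mult tendsto_const tendsto_power eps(2))
  moreover have "0 < d + j" using sparse by (auto simp: j_def d_def)
  hence "M ^ ?k * (0 ^ d * 0 ^ j) = (0::real)" by (simp flip: power_add)
  ultimately have g: "g \<longlonglongrightarrow> 0" by simp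
  have upper: "\<forall>\<^sub>F n in sequentially. measure_pmf.prob (RIG n (m n) (P n))
      {S. pattern_embeddings n (m n) (eps n * sqrt (real (m n))) Ns l S \<noteq> {}} \<le> g n"
    using M
  proof eventually_elim
    case (elim n)
    let ?s = "sqrt (real (m n))"
    have "measure_pmf.prob (RIG n (m n) (P n))
        {S. pattern_embeddings n (m n) (eps n * ?s) Ns l S \<noteq> {}}
      \<le> measure_pmf.expectation (RIG n (m n) (P n))
           (\<lambda>S. real (card (pattern_embeddings n (m n) (eps n * ?s) Ns l S)))"
      by (rule prob_pattern_embeddings_nonempty_le)
    also have "\<dots> \<le> M ^ ?k * real (m n) ^ l * (eps n * ?s / real (m n)) ^ (\<Sum>i<?k. card (Ns ! i) - 2)
                       / real (m n) ^ ?k"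
      using elim eps(1)[of n] by (intro expectation_card_pattern_embeddings_le_second_moment[OF P _ _ _ _ Ns]) auto
    also have "\<dots> = g n"
      unfolding g_def d_def[symmetric] using elim sparse(1) by (intro power_rescale_eq) (auto simp: j_def d_def)
    finally show ?case .
  qed
  have lower: "\<forall>\<^sub>F n in sequentially. 0 \<le> measure_pmf.prob (RIG n (m n) (P n))
      {S. pattern_embeddings n (m n) (eps n * sqrt (real (m n))) Ns l S \<noteq> {}}"
    by simp
  show ?thesis by (rule tendsto_sandwich[OF lower upper tendsto_const g])
qed

lemma Yval_gt_iff:
  assumes "m > 0" "n > 0"
  shows "Yval n m k > e * sqrt (real n) \<longleftrightarrow> real k > e * sqrt (real m)"
proof -
  have "Yval n m k = sqrt (real n) * (real k / sqrt (real m))"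
    unfolding Yval_def by (simp add: real_sqrt_divide)
  thus ?thesis using assms by (simp add: pos_less_divide_eq mult.commute)
qed

lemma bad_patterns_sparse:
  assumes "(Ns, l) \<in> set bad_patterns"
  shows "\<forall>i<length Ns. Ns ! i \<subseteq> {..<l} \<and> 2 \<le> card (Ns ! i)"
    and "2 * l \<le> 2 * length Ns + (\<Sum>i<length Ns. card (Ns ! i) - 2)"
    and "0 < (\<Sum>i<length Ns. card (Ns ! i) - 2) \<or> l < length Ns"
  using assms unfolding bad_patterns_def
  by (auto simp: less_Suc_eq numeral_eq_Suc lessThan_Suc card_insert_if)

lemma clique_gap_bounded_in_probability:
  assumes seq: "RIG_seq m P" "condA m P" "var_bounded m P" and e: "e > 0"
  shows "\<exists>K::real. \<forall>\<^sub>F n in sequentially. measure_pmf.prob (RIG n (m n) (P n))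
           {S. \<bar>real (clique_number n S) - real (mono_clique_number n (m n) S)\<bar> > K} < e"
proof -
  obtain M where "M \<ge> 0" and M: "\<forall>\<^sub>F n in sequentially.
      m n > 0 \<and> n > 0 \<and> measure_pmf.expectation (P n) (\<lambda>k. (Yval n (m n) k)\<^sup>2) \<le> M"
    using second_moment_eventually_bounded[OF seq] .
  define Q where "Q = M ^ 2 + M ^ 3"
  define K where "K = 2 + Q / e"
  have "Q \<ge> 0" using \<open>M \<ge> 0\<close> by (simp add: Q_def)
  hence "K > 1" "Q / (K - 1) < e"
    using e by (simp_all add: K_def field_simps)
  have "\<forall>\<^sub>F n in sequentially. measure_pmf.prob (RIG n (m n) (P n))
      {S. \<bar>real (clique_number n S) - real (mono_clique_number n (m n) S)\<bar> > K} < e"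
    using M
  proof eventually_elim
    case (elim n)
    hence "measure_pmf.prob (RIG n (m n) (P n))
        {S. \<bar>real (clique_number n S) - real (mono_clique_number n (m n) S)\<bar> > K} \<le> Q / (K - 1)"
      using seq(1) \<open>K > 1\<close> unfolding Q_def RIG_seq_def by (intro prob_clique_gap_gt_le) auto
    thus ?case using \<open>Q / (K - 1) < e\<close> by linarith
  qed
  thus ?thesis by blast
qed

lemma prob_attribute_set_gt_tendsto_0:
  assumes P: "\<And>n. set_pmf (P n) \<subseteq> {..m n}"
    and pos: "\<forall>\<^sub>F n in sequentially. m n > 0 \<and> n > 0"
    and tail: "(\<lambda>n. real n * measure_pmf.prob (P n) {k. Yval n (m n) k > eps n * sqrt (real n)}) \<longlonglongrightarrow> 0"
  shows "(\<lambda>n. measure_pmf.prob (RIG n (m n) (P n))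
            {S. \<exists>v<n. real (card (S v)) > eps n * sqrt (real (m n))}) \<longlonglongrightarrow> 0"
proof (rule tendsto_sandwich[OF always_eventually _ tendsto_const tail])
  show "\<forall>\<^sub>F n in sequentially.
          measure_pmf.prob (RIG n (m n) (P n)) {S. \<exists>v<n. real (card (S v)) > eps n * sqrt (real (m n))}
        \<le> real n * measure_pmf.prob (P n) {k. Yval n (m n) k > eps n * sqrt (real n)}"
    using pos
  proof eventually_elim
    case (elim n)
    thus ?case
      using prob_attribute_set_gt_le[OF P, of n n "eps n * sqrt (real (m n))"] by (simp add: Yval_gt_iff)
  qed
qed simp

lemma clique_number_le_mono_clique_number_whp:
  assumes seq: "RIG_seq m P" "condA m P" "var_bounded m P"
    and eps: "\<And>n. eps n > 0" "eps \<longlonglongrightarrow> 0"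
    and tail: "(\<lambda>n. real n * measure_pmf.prob (P n) {k. Yval n (m n) k > eps n * sqrt (real n)}) \<longlonglongrightarrow> 0"
  shows "(\<lambda>n. measure_pmf.prob (RIG n (m n) (P n))
            {S. real (clique_number n S) \<le> max 3 (real (mono_clique_number n (m n) S) + 3)}) \<longlonglongrightarrow> 1"
proof -
  have P: "set_pmf (P n) \<subseteq> {..m n}" for n using seq(1) unfolding RIG_seq_def by auto
  have m_lim: "filterlim m at_top sequentially" using seq(1) unfolding RIG_seq_def by auto
  obtain M where M: "\<forall>\<^sub>F n in sequentially.
      m n > 0 \<and> n > 0 \<and> measure_pmf.expectation (P n) (\<lambda>k. (Yval n (m n) k)\<^sup>2) \<le> M"
    using second_moment_eventually_bounded[OF seq] by blast
  let ?T = "\<lambda>n. eps n * sqrt (real (m n))"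
  let ?p = "\<lambda>n. measure_pmf.prob (RIG n (m n) (P n))"
  have "\<forall>\<^sub>F n in sequentially. m n > 0 \<and> n > 0" using M by (rule eventually_mono) simp
  hence "(\<lambda>n. ?p n {S. \<exists>v<n. real (card (S v)) > ?T n}) \<longlonglongrightarrow> 0"
    by (rule prob_attribute_set_gt_tendsto_0[OF P _ tail])
  moreover have "(\<lambda>n. ?p n {S. pattern_embeddings n (m n) (?T n) Ns l S \<noteq> {}}) \<longlonglongrightarrow> 0"
    if "(Ns, l) \<in> set bad_patterns" for Ns l
    using eps(1) by (intro prob_pattern_embeddings_tendsto_0[OF P M m_lim _ eps(2)]
        bad_patterns_sparse[OF that] less_imp_le)
  ultimately have bad: "(\<lambda>n. ?p n {S. \<exists>v<n. real (card (S v)) > ?T n}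
      + (\<Sum>(Ns, l)\<in>set bad_patterns. ?p n {S. pattern_embeddings n (m n) (?T n) Ns l S \<noteq> {}}))
      \<longlonglongrightarrow> 0"
    by (intro tendsto_add_zero tendsto_null_sum) auto
  have "\<forall>\<^sub>F n in sequentially.
      1 - (?p n {S. \<exists>v<n. real (card (S v)) > ?T n}
        + (\<Sum>(Ns, l)\<in>set bad_patterns. ?p n {S. pattern_embeddings n (m n) (?T n) Ns l S \<noteq> {}}))
      \<le> ?p n {S. real (clique_number n S) \<le> max 3 (real (mono_clique_number n (m n) S) + 3)}"
  proof (intro always_eventually allI)
    fix n
    let ?A = "{S. clique_number n S > max 3 (mono_clique_number n (m n) S)}"
    have "?p n (UNIV - ?A)
        \<le> ?p n {S. real (clique_number n S) \<le> max 3 (real (mono_clique_number n (m n) S) + 3)}"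
      by (intro measure_pmf.finite_measure_mono) (auto simp: max_def)
    hence "1 - ?p n ?A
        \<le> ?p n {S. real (clique_number n S) \<le> max 3 (real (mono_clique_number n (m n) S) + 3)}"
      using measure_pmf.prob_compl[of ?A] by simp
    thus "1 - (?p n {S. \<exists>v<n. real (card (S v)) > ?T n}
        + (\<Sum>(Ns, l)\<in>set bad_patterns. ?p n {S. pattern_embeddings n (m n) (?T n) Ns l S \<noteq> {}}))
      \<le> ?p n {S. real (clique_number n S) \<le> max 3 (real (mono_clique_number n (m n) S) + 3)}"
      using prob_clique_number_gt_le[OF P, of n n "?T n"] by linarith
  qed
  moreover have "\<forall>\<^sub>F n in sequentially.
      ?p n {S. real (clique_number n S) \<le> max 3 (real (mono_clique_number n (m n) S) + 3)} \<le> 1"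
    by (simp add: measure_pmf.prob_le_1)
  moreover have "(\<lambda>n. 1 - (?p n {S. \<exists>v<n. real (card (S v)) > ?T n}
        + (\<Sum>(Ns, l)\<in>set bad_patterns. ?p n {S. pattern_embeddings n (m n) (?T n) Ns l S \<noteq> {}})))
      \<longlonglongrightarrow> 1"
    using tendsto_diff[OF tendsto_const bad, of 1] by simp
  ultimately show ?thesis by (rule tendsto_sandwich[OF _ _ _ tendsto_const])
qed

theorem theorem2:
  shows "(\<forall>m P. RIG_seq m P \<and> condA m P \<and> var_bounded m P \<longrightarrow>
            (\<forall>e>0. \<exists>K::real. \<forall>\<^sub>F n in sequentially.
               measure_pmf.prob (RIG n (m n) (P n))
                 {S. \<bar>real (clique_number n S) - real (mono_clique_number n (m n) S)\<bar> > K} < e))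
       \<and> (\<exists>C::real. \<forall>m P. RIG_seq m P \<and> condA m P \<and> var_bounded m P \<and>
            (\<exists>eps :: nat \<Rightarrow> real. (\<forall>n. eps n > 0) \<and> eps \<longlonglongrightarrow> 0 \<and>
               (\<lambda>n. real n * measure_pmf.prob (P n) {k. Yval n (m n) k > eps n * sqrt (real n)})
                 \<longlonglongrightarrow> 0)
            \<longrightarrow> (\<lambda>n. measure_pmf.prob (RIG n (m n) (P n))
                   {S. real (clique_number n S) \<le> max C (real (mono_clique_number n (m n) S) + 3)})
                 \<longlonglongrightarrow> 1)"
proof (intro conjI allI impI)
  fix m P and e :: real
  assume "RIG_seq m P \<and> condA m P \<and> var_bounded m P" "e > 0"
  thus "\<exists>K::real. \<forall>\<^sub>F n in sequentially. measure_pmf.prob (RIG n (m n) (P n))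
          {S. \<bar>real (clique_number n S) - real (mono_clique_number n (m n) S)\<bar> > K} < e"
    using clique_gap_bounded_in_probability by blast
next
  show "\<exists>C::real. \<forall>m P. RIG_seq m P \<and> condA m P \<and> var_bounded m P \<and>
            (\<exists>eps :: nat \<Rightarrow> real. (\<forall>n. eps n > 0) \<and> eps \<longlonglongrightarrow> 0 \<and>
               (\<lambda>n. real n * measure_pmf.prob (P n) {k. Yval n (m n) k > eps n * sqrt (real n)})
                 \<longlonglongrightarrow> 0)
            \<longrightarrow> (\<lambda>n. measure_pmf.prob (RIG n (m n) (P n))
                   {S. real (clique_number n S) \<le> max C (real (mono_clique_number n (m n) S) + 3)})
                 \<longlonglongrightarrow> 1"
    using clique_number_le_mono_clique_number_whp by (intro exI[of _ 3]) blast
qed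

end
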